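(* There exist a finite candidate set $C$, a tie-breaking order $>$ on $C$, a preference profile $V$, and for each GS-manipulator $i$ at $V$ under 4-Approval a minimal GS-manipulation $m_i$ of $i$, such that the GS-game in which each GS-manipulator $i$ has action set $A_i=\{v_i,m_i\}$ has no Nash equilibrium in pure strategies.
   Context: Each voter $i$ has a strict linear order $v_i$ over $C$; $\mathrm{top}_k(v)$ is the set of the $k$ highest-ranked candidates of $v$. $k$-Approval: each candidate gets one point from each voter ranking her among his top $k$; the highest score wins, ties broken in favour of the candidate highest in the fixed strict linear order $>$. Write $\mathcal{R}$ for the rule and $(V_{-i},v_i')$ for $V$ with $v_i$ replaced by $v_i'$. A GS-manipulation of voter $i$ at $V$ is a vote $v_i'$ such that $i$ strictly prefers $\mathcal{R}(V_{-i},v_i')$ to $\mathcal{R}(V)$ and for every vote $v_i''$ either $\mathcal{R}(V_{-i},v_i'')=\mathcal{R}(V_{-i},v_i')$ or $i$ strictly prefers $\mathcal{R}(V_{-i},v_i')$ to $\mathcal{R}(V_{-i},v_i'')$; it is in favour of $x=\mathcal{R}(V_{-i},v_i')$; $i$ is a GS-manipulator if he has one. GS-game for $V$: players are all GS-manipulators at $V$; player $i$'s action set contains $v_i$ and some of his GS-manipulations; non-players vote sincerely; players compare action profiles via their preferences over the resulting winners. Pure Nash equilibrium: no player can obtain a strictly preferred winner by switching to another action of his own action set. Let $w=\mathcal{R}(V)$. A GS-manipulation $v_i'$ in favour of $x$ is of Type 1 if $w,x\notin\mathrm{top}_k(v_i)$ and of Type 2 if $w,x\in\mathrm{top}_k(v_i)$.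 A Type 1 GS-manipulation in favour of $x$ is minimal if $\mathrm{top}_k(v_i')$ is obtained from $\mathrm{top}_k(v_i)$ by removing the $k$-th ranked candidate of $v_i$ and adding $x$. A Type 2 GS-manipulation $v_i'$ is minimal if $\ell=|\mathrm{top}_k(v_i)\setminus\mathrm{top}_k(v_i')|$ is the smallest possible among GS-manipulations of $i$ and $\mathrm{top}_k(v_i')\setminus\mathrm{top}_k(v_i)$ consists of the $\ell$ candidates ranked highest by $v_i$ among those outside $\mathrm{top}_k(v_i)$. *)

theory Defs
  imports Main
begin

text \<open>A vote (strict linear order over C) is a list enumerating C from best to worst.
  Voters are 0..<n; a profile is V :: nat => nat list (only entries i < n matter).
  The tie-breaking order is also a list tb enumerating C (earlier = higher).\<close>

definition is_vote :: "nat set \<Rightarrow> nat list \<Rightarrow> bool" where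
  "is_vote C v \<longleftrightarrow> distinct v \<and> set v = C"

definition prefers :: "nat list \<Rightarrow> nat \<Rightarrow> nat \<Rightarrow> bool" where
  "prefers v a b \<longleftrightarrow> (\<exists>i j. i < j \<and> j < length v \<and> v ! i = a \<and> v ! j = b)"

definition topk :: "nat \<Rightarrow> nat list \<Rightarrow> nat set" where
  "topk k v = set (take k v)"

definition score :: "nat \<Rightarrow> nat \<Rightarrow> (nat \<Rightarrow> nat list) \<Rightarrow> nat \<Rightarrow> nat" where
  "score k n V c = card {i. i < n \<and> c \<in> topk k (V i)}"

definition kapp_winner :: "nat \<Rightarrow> nat list \<Rightarrow> nat \<Rightarrow> (nat \<Rightarrow> nat list) \<Rightarrow> nat" where
  "kapp_winner k tb n V =
     hd (filter (\<lambda>c. \<forall>d\<in>set tb. score k n V d \<le> score k n V c) tb)"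

definition GS_manipulation ::
  "nat \<Rightarrow> nat list \<Rightarrow> nat \<Rightarrow> (nat \<Rightarrow> nat list) \<Rightarrow> nat \<Rightarrow> nat list \<Rightarrow> bool" where
  "GS_manipulation k tb n V i v' \<longleftrightarrow>
     i < n \<and> is_vote (set tb) v' \<and>
     prefers (V i) (kapp_winner k tb n (V(i := v'))) (kapp_winner k tb n V) \<and>
     (\<forall>v''. is_vote (set tb) v'' \<longrightarrow>
        kapp_winner k tb n (V(i := v'')) = kapp_winner k tb n (V(i := v')) \<or>
        prefers (V i) (kapp_winner k tb n (V(i := v'))) (kapp_winner k tb n (V(i := v''))))"

definition GS_manipulator :: "nat \<Rightarrow> nat list \<Rightarrow> nat \<Rightarrow> (nat \<Rightarrow> nat list) \<Rightarrow> nat \<Rightarrow> bool" where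
  "GS_manipulator k tb n V i \<longleftrightarrow> (\<exists>v'. GS_manipulation k tb n V i v')"

definition minimal_type1 ::
  "nat \<Rightarrow> nat list \<Rightarrow> nat \<Rightarrow> (nat \<Rightarrow> nat list) \<Rightarrow> nat \<Rightarrow> nat list \<Rightarrow> bool" where
  "minimal_type1 k tb n V i v' \<longleftrightarrow>
     (let w = kapp_winner k tb n V; x = kapp_winner k tb n (V(i := v')) in
      GS_manipulation k tb n V i v' \<and>
      w \<notin> topk k (V i) \<and> x \<notin> topk k (V i) \<and>
      topk k v' = (topk k (V i) - {V i ! (k - 1)}) \<union> {x})"

definition minimal_type2 ::
  "nat \<Rightarrow> nat list \<Rightarrow> nat \<Rightarrow> (nat \<Rightarrow> nat list) \<Rightarrow> nat \<Rightarrow> nat list \<Rightarrow> bool" where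
  "minimal_type2 k tb n V i v' \<longleftrightarrow>
     (let w = kapp_winner k tb n V; x = kapp_winner k tb n (V(i := v'));
          l = card (topk k (V i) - topk k v') in
      GS_manipulation k tb n V i v' \<and>
      w \<in> topk k (V i) \<and> x \<in> topk k (V i) \<and>
      (\<forall>u. GS_manipulation k tb n V i u \<longrightarrow> l \<le> card (topk k (V i) - topk k u)) \<and>
      topk k v' - topk k (V i) = set (take l (drop k (V i))))"

definition minimal_GS_manipulation ::
  "nat \<Rightarrow> nat list \<Rightarrow> nat \<Rightarrow> (nat \<Rightarrow> nat list) \<Rightarrow> nat \<Rightarrow> nat list \<Rightarrow> bool" where
  "minimal_GS_manipulation k tb n V i v' \<longleftrightarrow>
     minimal_type1 k tb n V i v' \<or> minimal_type2 k tb n V i v'"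

definition game_profile ::
  "nat \<Rightarrow> nat list \<Rightarrow> nat \<Rightarrow> (nat \<Rightarrow> nat list) \<Rightarrow> (nat \<Rightarrow> nat list) \<Rightarrow> (nat \<Rightarrow> nat list) \<Rightarrow> bool" where
  "game_profile k tb n V m W \<longleftrightarrow>
     (\<forall>j<n. (GS_manipulator k tb n V j \<longrightarrow> W j \<in> {V j, m j}) \<and>
            (\<not> GS_manipulator k tb n V j \<longrightarrow> W j = V j))"

definition pure_NE ::
  "nat \<Rightarrow> nat list \<Rightarrow> nat \<Rightarrow> (nat \<Rightarrow> nat list) \<Rightarrow> (nat \<Rightarrow> nat list) \<Rightarrow> (nat \<Rightarrow> nat list) \<Rightarrow> bool" where
  "pure_NE k tb n V m W \<longleftrightarrow>
     game_profile k tb n V m W \<and>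
     (\<forall>i<n. GS_manipulator k tb n V i \<longrightarrow>
        (\<forall>a\<in>{V i, m i}.
           \<not> prefers (V i) (kapp_winner k tb n (W(i := a))) (kapp_winner k tb n W)))"

end

theory Submission
  imports Defs
begin

text \<open>Seven candidates 0,...,6 with tie-breaking order 0 > 1 > ... > 6 and three voters;
  sincerely, 3 wins. Voters 0 and 1 can make their favourite 1 win, but only by withdrawing
  approval from both 3 and 4; voter 2 can make 4 win by replacing 3 with 6 in his top four.
  Writing (a0,a1,a2) for action profiles (s = sincere, m = minimal manipulation), some player
  always has an improving deviation: the unilateral improvements run in the cycle
  (s,s,m) \<rightarrow> (m,s,m) \<rightarrow> (m,m,m) \<rightarrow> (s,m,m) \<rightarrow> (s,s,m) with winners 4, 0, 2, 0,
  and every other profile has an improving move into this cycle.\<close>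

lemma score_eq_length_filter:
  "score k n V c = length (filter (\<lambda>i. c \<in> topk k (V i)) [0..<n])"
proof -
  have "{i. i < n \<and> c \<in> topk k (V i)} = set (filter (\<lambda>i. c \<in> topk k (V i)) [0..<n])"
    by auto
  then show ?thesis
    unfolding score_def by (metis distinct_card distinct_filter distinct_upt)
qed

lemma prefers_Nil [simp]: "\<not> prefers [] a b"
  by (simp add: prefers_def)

lemma prefers_Cons:
  "prefers (x # xs) a b \<longleftrightarrow> (a = x \<and> b \<in> set xs) \<or> prefers xs a b"
proof
  assume "prefers (x # xs) a b"
  then obtain i j where ij: "i < j" "j < length (x # xs)" "(x # xs) ! i = a" "(x # xs) ! j = b"
    unfolding prefers_def by blast
  then obtain j' where j: "j = Suc j'"
    by (cases j) auto
  show "(a = x \<and> b \<in> set xs) \<or> prefers xs a b"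
  proof (cases i)
    case 0
    then show ?thesis using ij j by auto
  next
    case (Suc i')
    then show ?thesis using ij j unfolding prefers_def by auto
  qed
next
  assume "(a = x \<and> b \<in> set xs) \<or> prefers xs a b"
  then show "prefers (x # xs) a b"
  proof
    assume ab: "a = x \<and> b \<in> set xs"
    then obtain j where "j < length xs" "xs ! j = b"
      by (meson in_set_conv_nth)
    then show ?thesis
      unfolding prefers_def using ab by (intro exI[of _ 0] exI[of _ "Suc j"]) auto
  next
    assume "prefers xs a b"
    then obtain i j where "i < j" "j < length xs" "xs ! i = a" "xs ! j = b"
      unfolding prefers_def by blast
    then show ?thesis
      unfolding prefers_def by (intro exI[of _ "Suc i"] exI[of _ "Suc j"]) auto
  qed
qed

lemma prefers_irrefl:
  assumes "distinct v"
  shows "\<not> prefers v a a"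
proof
  assume "prefers v a a"
  then obtain i j where "i < j" "j < length v" "v ! i = a" "v ! j = a"
    unfolding prefers_def by blast
  with assms show False
    using nth_eq_iff_index_eq[of v i j] by simp
qed

lemma kapp_winner_in_set_and_score_max:
  assumes "tb \<noteq> []"
  shows "kapp_winner k tb n V \<in> set tb \<and>
         (\<forall>d\<in>set tb. score k n V d \<le> score k n V (kapp_winner k tb n V))"
proof -
  let ?s = "score k n V"
  let ?best = "filter (\<lambda>c. \<forall>d\<in>set tb. ?s d \<le> ?s c) tb"
  have "Max (?s ` set tb) \<in> ?s ` set tb"
    using assms by (intro Max_in) auto
  then obtain c where "c \<in> set tb" "?s c = Max (?s ` set tb)"
    by auto
  then have "c \<in> set ?best"
    by auto
  then have "?best \<noteq> []"
    by (metis empty_iff empty_set)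
  then have "hd ?best \<in> set ?best"
    by (rule hd_in_set)
  then show ?thesis
    unfolding kapp_winner_def by auto
qed

lemma kapp_winner_cong_topk:
  assumes "\<And>i. i < n \<Longrightarrow> topk k (V i) = topk k (W i)"
  shows "kapp_winner k tb n V = kapp_winner k tb n W"
proof -
  have "score k n V = score k n W"
    using assms by (auto simp: score_def intro!: ext arg_cong[where f = card])
  then show ?thesis
    unfolding kapp_winner_def by simp
qed

lemma card_topk_vote:
  assumes "is_vote C v"
  shows "card (topk k v) = min k (card C)"
proof -
  have "distinct v" "card C = length v"
    using assms distinct_card[of v] by (auto simp: is_vote_def)
  then show ?thesis
    by (simp add: topk_def distinct_card min.commute)
qed

lemma GS_manipulation_drops_topk:
  assumes gs: "GS_manipulation k tb n V i u" and vote: "is_vote (set tb) (V i)"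
  shows "topk k (V i) - topk k u \<noteq> {}"
proof
  assume "topk k (V i) - topk k u = {}"
  moreover have "card (topk k u) = card (topk k (V i))"
    using gs vote by (simp add: GS_manipulation_def card_topk_vote)
  ultimately have "topk k u = topk k (V i)"
    by (metis Diff_eq_empty_iff card_subset_eq finite_set topk_def)
  then have "kapp_winner k tb n (V(i := u)) = kapp_winner k tb n V"
    by (intro kapp_winner_cong_topk) simp
  with gs vote show False
    by (simp add: GS_manipulation_def is_vote_def prefers_irrefl)
qed

definition tiebreak :: "nat list" where
  "tiebreak = [0, 1, 2, 3, 4, 5, 6]"

definition sincere :: "nat \<Rightarrow> nat list" where
  "sincere i =
     (if i = 0 then [1, 0, 3, 4, 2, 5, 6]
      else if i = 1 then [1, 3, 5, 4, 2, 6, 0]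
      else [2, 4, 3, 6, 0, 1, 5])"

definition manip :: "nat \<Rightarrow> nat list" where
  "manip i =
     (if i = 0 then [1, 0, 2, 5, 3, 4, 6]
      else if i = 1 then [1, 5, 2, 6, 3, 4, 0]
      else [2, 4, 6, 0, 3, 1, 5])"

text \<open>Stops the simplifier from rewriting the voter and candidate 1 to \<open>Suc 0\<close>, which would
  keep the computed winner equations below from matching.\<close>
declare One_nat_def [simp del]

abbreviation winner :: "(nat \<Rightarrow> nat list) \<Rightarrow> nat" where
  "winner V \<equiv> kapp_winner 4 tiebreak 3 V"

lemmas example_defs = tiebreak_def sincere_def manip_def

lemma upt_0_3: "[0..<3] = [0::nat, 1, 2]"
  by (simp add: upt_rec)

lemmas evaluate_winner =
  kapp_winner_def score_eq_length_filter upt_0_3 topk_def example_defs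

lemma is_vote_example:
  "is_vote (set tiebreak) tiebreak" "is_vote (set tiebreak) (sincere i)"
  "is_vote (set tiebreak) (manip i)"
  by (auto simp: is_vote_def example_defs)

lemma set_tiebreak: "set tiebreak = {0, 1, 2, 3, 4, 5, 6}"
  by (simp add: tiebreak_def)

lemma winner_in_tiebreak_and_score_max:
  "winner V \<in> set tiebreak \<and> (\<forall>c\<in>set tiebreak. score 4 3 V c \<le> score 4 3 V (winner V))"
  by (rule kapp_winner_in_set_and_score_max) (simp add: tiebreak_def)

lemma winner_in_tiebreak: "winner V \<in> set tiebreak"
  using winner_in_tiebreak_and_score_max by blast

lemma score_le_winner: "c \<in> set tiebreak \<Longrightarrow> score 4 3 V c \<le> score 4 3 V (winner V)"
  using winner_in_tiebreak_and_score_max by blast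

lemma score_update_sincere:
  "score 4 3 (sincere(i := u)) c =
     length (filter (\<lambda>j. c \<in> topk 4 ((sincere(i := u)) j)) [0, 1, 2])"
  by (simp add: score_eq_length_filter upt_0_3)

definition winner3 :: "nat list \<Rightarrow> nat list \<Rightarrow> nat list \<Rightarrow> nat" where
  "winner3 a b c = winner (\<lambda>i. if i = 0 then a else if i = 1 then b else c)"

lemma less_3_iff: "(i::nat) < 3 \<longleftrightarrow> i = 0 \<or> i = 1 \<or> i = 2"
  by arith

lemma ex_less_3_iff: "(\<exists>i<3. P i) \<longleftrightarrow> P (0::nat) \<or> P 1 \<or> P 2"
  by (auto simp: less_3_iff)

lemma winner_eq_winner3: "winner W = winner3 (W 0) (W 1) (W 2)"
  unfolding winner3_def by (rule kapp_winner_cong_topk) (auto simp: less_3_iff)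

lemma winner3_table:
  "winner3 (sincere 0) (sincere 1) (sincere 2) = 3"
  "winner3 (sincere 0) (sincere 1) (manip 2) = 4"
  "winner3 (sincere 0) (manip 1) (sincere 2) = 1"
  "winner3 (sincere 0) (manip 1) (manip 2) = 0"
  "winner3 (manip 0) (sincere 1) (sincere 2) = 1"
  "winner3 (manip 0) (sincere 1) (manip 2) = 0"
  "winner3 (manip 0) (manip 1) (sincere 2) = 2"
  "winner3 (manip 0) (manip 1) (manip 2) = 2"
  by (simp_all add: winner3_def evaluate_winner)

lemma winner_sincere: "winner sincere = 3"
  by (subst winner_eq_winner3) (rule winner3_table)

lemma winner_manip:
  "winner (sincere(0 := manip 0)) = 1"
  "winner (sincere(1 := manip 1)) = 1"
  "winner (sincere(2 := manip 2)) = 4"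
  by (simp_all add: winner_eq_winner3 winner3_table)

text \<open>Whatever voter 2 votes, candidate 1 keeps the approvals of voters 0 and 1, while 2 gets
  at most voter 2's.\<close>

lemma winner_update_2_ne_2: "winner (sincere(2 := u)) \<noteq> 2"
proof
  assume "winner (sincere(2 := u)) = 2"
  then have "score 4 3 (sincere(2 := u)) 1 \<le> score 4 3 (sincere(2 := u)) 2"
    using score_le_winner[of 1 "sincere(2 := u)"] by (simp add: set_tiebreak)
  then show False
    by (simp add: score_update_sincere sincere_def topk_def split: if_splits)
qed

lemma winner_manip_optimal:
  assumes "i < 3"
  shows "winner (sincere(i := u)) = winner (sincere(i := manip i)) \<or>
         prefers (sincere i) (winner (sincere(i := manip i))) (winner (sincere(i := u)))"
proof -
  have w: "winner (sincere(i := u)) \<in> set tiebreak"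
    by (rule winner_in_tiebreak)
  from assms consider "i = 0" | "i = 1" | "i = 2"
    by (auto simp: less_3_iff)
  then show ?thesis
  proof cases
    case 1
    with w show ?thesis
      by (auto simp: winner_manip sincere_def set_tiebreak prefers_Cons)
  next
    case 2
    with w show ?thesis
      by (auto simp: winner_manip sincere_def set_tiebreak prefers_Cons)
  next
    case 3
    with w winner_update_2_ne_2[of u] show ?thesis
      by (auto simp: winner_manip sincere_def set_tiebreak prefers_Cons)
  qed
qed

lemma GS_manipulation_manip:
  assumes "i < 3"
  shows "GS_manipulation 4 tiebreak 3 sincere i (manip i)"
proof -
  have "prefers (sincere i) (winner (sincere(i := manip i))) (winner sincere)"
    using assms by (auto simp: less_3_iff winner_manip winner_sincere sincere_def prefers_Cons)
  then show ?thesis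
    using assms winner_manip_optimal is_vote_example by (simp add: GS_manipulation_def)
qed

lemma GS_manipulator_every_voter: "i < 3 \<Longrightarrow> GS_manipulator 4 tiebreak 3 sincere i"
  using GS_manipulation_manip by (auto simp: GS_manipulator_def)

text \<open>To overturn 3 in favour of 1, voters 0 and 1 must withdraw their approval from 3 and from
  4, both of which the two other voters approve.\<close>

lemma GS_manipulation_drops_3_4:
  assumes "i < 2" and gs: "GS_manipulation 4 tiebreak 3 sincere i u"
  shows "{3, 4} \<subseteq> topk 4 (sincere i) - topk 4 u"
proof -
  let ?V = "sincere(i := u)"
  have i: "i = 0 \<or> i = 1"
    using \<open>i < 2\<close> by auto
  have "prefers (sincere i) (winner ?V) 3"
    using gs by (simp add: GS_manipulation_def winner_sincere)
  then have y: "winner ?V = 1 \<or> i = 0 \<and> winner ?V = 0"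
    using i by (auto simp: sincere_def prefers_Cons)
  have s3: "score 4 3 ?V 3 \<le> score 4 3 ?V (winner ?V)"
    and s4: "score 4 3 ?V 4 \<le> score 4 3 ?V (winner ?V)"
    by (simp_all add: score_le_winner set_tiebreak)
  have "winner ?V \<noteq> 0"
  proof
    assume "winner ?V = 0"
    with s3 y show False
      by (auto simp: score_update_sincere sincere_def topk_def split: if_splits)
  qed
  with y have "winner ?V = 1"
    by simp
  with s3 s4 i have "3 \<notin> topk 4 u" "4 \<notin> topk 4 u"
    by (auto simp: score_update_sincere sincere_def topk_def split: if_splits)
  with i show ?thesis
    by (auto simp: sincere_def topk_def)
qed

lemma card_drop_manip_le:
  assumes "i < 3" and gs: "GS_manipulation 4 tiebreak 3 sincere i u"
  shows "card (topk 4 (sincere i) - topk 4 (manip i)) \<le> card (topk 4 (sincere i) - topk 4 u)"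
proof (cases "i < 2")
  case True
  then have "card (topk 4 (sincere i) - topk 4 (manip i)) = card {3::nat, 4}"
    by (auto simp: less_Suc_eq topk_def sincere_def manip_def)
  also have "\<dots> \<le> card (topk 4 (sincere i) - topk 4 u)"
    using GS_manipulation_drops_3_4[OF True gs] by (intro card_mono) (simp_all add: topk_def)
  finally show ?thesis .
next
  case False
  with assms have "i = 2"
    by simp
  have "topk 4 (sincere i) - topk 4 u \<noteq> {}"
    by (rule GS_manipulation_drops_topk[OF gs is_vote_example(2)])
  then have "0 < card (topk 4 (sincere i) - topk 4 u)"
    by (simp add: card_gt_0_iff topk_def)
  moreover have "card (topk 4 (sincere i) - topk 4 (manip i)) = 1"
    using \<open>i = 2\<close> by (simp add: topk_def sincere_def manip_def)
  ultimately show ?thesis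
    by linarith
qed

lemma minimal_type2_manip:
  assumes "i < 3"
  shows "minimal_type2 4 tiebreak 3 sincere i (manip i)"
proof -
  let ?l = "card (topk 4 (sincere i) - topk 4 (manip i))"
  have "winner sincere \<in> topk 4 (sincere i) \<and> winner (sincere(i := manip i)) \<in> topk 4 (sincere i)"
    using assms by (auto simp: less_3_iff winner_sincere winner_manip topk_def sincere_def)
  moreover have "topk 4 (manip i) - topk 4 (sincere i) = set (take ?l (drop 4 (sincere i)))"
    using assms unfolding less_3_iff by (elim disjE) (auto simp: topk_def sincere_def manip_def)
  ultimately show ?thesis
    using GS_manipulation_manip[OF assms] card_drop_manip_le[OF assms]
    by (simp add: minimal_type2_def Let_def)
qed

lemma improving_deviation_exists:
  assumes "\<forall>i<3. W i = sincere i \<or> W i = manip i"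
  shows "\<exists>i<3. \<exists>a\<in>{sincere i, manip i}. prefers (sincere i) (winner (W(i := a))) (winner W)"
proof -
  have "W 0 = sincere 0 \<or> W 0 = manip 0" "W 1 = sincere 1 \<or> W 1 = manip 1"
    "W 2 = sincere 2 \<or> W 2 = manip 2"
    using assms by (simp_all add: less_3_iff)
  then show ?thesis
    unfolding ex_less_3_iff
    by (elim disjE) (simp_all add: winner_eq_winner3 winner3_table,
        simp_all add: sincere_def prefers_Cons)
qed

lemma no_pure_NE: "\<not> pure_NE 4 tiebreak 3 sincere manip W"
proof
  assume "pure_NE 4 tiebreak 3 sincere manip W"
  then have "\<forall>i<3. W i = sincere i \<or> W i = manip i"
    and "\<forall>i<3. \<forall>a\<in>{sincere i, manip i}. \<not> prefers (sincere i) (winner (W(i := a))) (winner W)"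
    using GS_manipulator_every_voter by (auto simp: pure_NE_def game_profile_def)
  then show False
    using improving_deviation_exists by blast
qed

theorem mainTheorem4:
  shows "\<exists>(C :: nat set) (tb :: nat list) (n :: nat) (V :: nat \<Rightarrow> nat list) (m :: nat \<Rightarrow> nat list).
     finite C \<and> is_vote C tb \<and> (\<forall>i<n. is_vote C (V i)) \<and>
     (\<forall>i<n. GS_manipulator 4 tb n V i \<longrightarrow> minimal_GS_manipulation 4 tb n V i (m i)) \<and>
     (\<forall>W. \<not> pure_NE 4 tb n V m W)"
proof (intro exI conjI allI impI)
  show "finite (set tiebreak)" "is_vote (set tiebreak) tiebreak"
    "is_vote (set tiebreak) (sincere i)" for i
    using is_vote_example by simp_all
  show "minimal_GS_manipulation 4 tiebreak 3 sincere i (manip i)" if "i < 3" for i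
    using minimal_type2_manip[OF that] by (simp add: minimal_GS_manipulation_def)
  show "\<not> pure_NE 4 tiebreak 3 sincere manip W" for W
    by (rule no_pure_NE)
qed

end
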